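(* Let $I$ be a finite set and $t$ a rooted tree with vertex set $I$. The interval $[\widehat{0},t]$ of the poset $\Pi_{\operatorname{NAP}}(I)$ is isomorphic to the poset $[t,\widehat{1}]_s$ of all sub-rooted trees of $t$ ordered by $\leq_s$.
   Context: $\Pi_{\operatorname{NAP}}(I)$ is the set of forests of rooted trees whose vertex set is exactly $I$ (each vertex labelled by an element of $I$). It is partially ordered as follows: $y$ covers $x$ iff $y$ is obtained from $x$ by adding an edge from the root of one component of $x$ to the root of another component of $x$ (the latter root remaining the root of the merged tree); $\leq$ is the reflexive–transitive closure. Its minimum $\widehat{0}$ is the forest of one-vertex trees; a rooted tree $t$ on $I$ is an element of $\Pi_{\operatorname{NAP}}(I)$. A sub-rooted tree of $t$ is the restriction of $t$ to a subset of vertices containing the root of $t$ and such that every vertex on the path from the root to a vertex of the subset is in the subset (a lower ideal of $t$ viewed as a poset with root as minimum). For rooted trees, $t\leq_s t'$ means $t'$ is a sub-rooted tree of $t$. $[t,\widehat{1}]_s$ denotes the set of sub-rooted trees of $t$ with the order $\leq_s$ (so $t$ is its minimum and the one-vertex tree on the root, $\widehat{1}$, is its maximum). *)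

theory Defs
  imports Main
begin

text \<open>A rooted forest on vertex set V is encoded by its set of edges E, where
  an edge (c, p) means that p is the parent of c.\<close>

definition rforest :: "'a set \<Rightarrow> ('a \<times> 'a) set \<Rightarrow> bool" where
  "rforest V E \<longleftrightarrow> E \<subseteq> V \<times> V
     \<and> (\<forall>a b c. (a, b) \<in> E \<longrightarrow> (a, c) \<in> E \<longrightarrow> b = c)
     \<and> acyclic E"

definition roots :: "'a set \<Rightarrow> ('a \<times> 'a) set \<Rightarrow> 'a set" where
  "roots V E = {v \<in> V. \<not> (\<exists>w. (v, w) \<in> E)}"

definition rtree :: "'a set \<Rightarrow> ('a \<times> 'a) set \<Rightarrow> bool" where
  "rtree V E \<longleftrightarrow> rforest V E \<and> (\<exists>r. roots V E = {r})"

text \<open>Covering relation of Pi_NAP(V): add an edge from the root r1 of one component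
  to the root r2 of another component; r2 remains the root of the merged tree.
  (Distinct roots lie in distinct components.)\<close>
definition nap_cover :: "'a set \<Rightarrow> ('a \<times> 'a) set \<Rightarrow> ('a \<times> 'a) set \<Rightarrow> bool" where
  "nap_cover V x y \<longleftrightarrow> (\<exists>r1 r2. r1 \<in> roots V x \<and> r2 \<in> roots V x \<and> r1 \<noteq> r2
     \<and> y = insert (r1, r2) x)"

definition nap_le :: "'a set \<Rightarrow> ('a \<times> 'a) set \<Rightarrow> ('a \<times> 'a) set \<Rightarrow> bool" where
  "nap_le V x y \<longleftrightarrow> rforest V x \<and> rforest V y \<and> (nap_cover V)\<^sup>*\<^sup>* x y"

text \<open>Minimum of Pi_NAP(V): the forest of one-vertex trees.\<close>
definition nap_zero :: "('a \<times> 'a) set" where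
  "nap_zero = {}"

definition subrooted :: "'a set \<times> ('a \<times> 'a) set \<Rightarrow> 'a set \<times> ('a \<times> 'a) set \<Rightarrow> bool" where
  "subrooted T' T \<longleftrightarrow> (case T' of (V', E') \<Rightarrow> case T of (V, E) \<Rightarrow>
     rtree V E \<and> V' \<subseteq> V \<and> (\<exists>r. roots V E = {r} \<and> r \<in> V')
     \<and> (\<forall>v w. v \<in> V' \<longrightarrow> (v, w) \<in> E \<longrightarrow> w \<in> V')
     \<and> E' = E \<inter> (V' \<times> V'))"

definition sub_le :: "'a set \<times> ('a \<times> 'a) set \<Rightarrow> 'a set \<times> ('a \<times> 'a) set \<Rightarrow> bool" where
  "sub_le T T' \<longleftrightarrow> subrooted T' T"

definition poset_iso :: "'b set \<Rightarrow> ('b \<Rightarrow> 'b \<Rightarrow> bool) \<Rightarrow> 'c set \<Rightarrow> ('c \<Rightarrow> 'c \<Rightarrow> bool) \<Rightarrow> bool" where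
  "poset_iso A le1 B le2 \<longleftrightarrow> (\<exists>f. bij_betw f A B
     \<and> (\<forall>x\<in>A. \<forall>y\<in>A. le1 x y \<longleftrightarrow> le2 (f x) (f y)))"

end

theory Submission
  imports Defs
begin

text \<open>Going up in \<open>\<Pi>\<^sub>N\<^sub>A\<^sub>P\<close> only adds edges, and an added edge always ends in a vertex that
  is still a root; conversely such an extension of finitely many edges can be realised by
  covers, adding the edges that end in roots of the larger forest last.  Below a tree \<open>t\<close>
  with root \<open>r\<close>, a forest \<open>x \<subseteq> t\<close> is therefore determined by its set of roots, and it lies
  below \<open>t\<close> exactly when this set is closed under taking parents in \<open>t\<close>, i.e. when it is the
  vertex set of a sub-rooted tree.  Larger forests have fewer roots, which reverses the
  order as \<open>\<le>\<^sub>s\<close> does.\<close>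

lemma rtranclp_nap_cover_imp:
  "(nap_cover V)\<^sup>*\<^sup>* x y \<Longrightarrow> x \<subseteq> y \<and> Range (y - x) \<inter> Domain x = {}"
proof (induction rule: rtranclp_induct)
  case (step y z)
  then obtain r1 r2 where "r1 \<in> roots V y" "r2 \<in> roots V y" "z = insert (r1, r2) y"
    unfolding nap_cover_def by blast
  with step.IH show ?case unfolding roots_def by blast
qed simp

lemma rtranclp_nap_coverI:
  assumes "finite (y - x)" "rforest V y" "x \<subseteq> y" "Range (y - x) \<inter> Domain x = {}"
  shows "(nap_cover V)\<^sup>*\<^sup>* x y"
  using assms
proof (induction "card (y - x)" arbitrary: y)
  case 0
  then show ?case by auto
next
  case (Suc n y)
  have y: "y \<subseteq> V \<times> V" "\<forall>a b c. (a, b) \<in> y \<longrightarrow> (a, c) \<in> y \<longrightarrow> b = c" "acyclic y"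
    using Suc.prems(2) unfolding rforest_def by auto
  have wf: "wf ((y - x)\<inverse>)"
    using Suc.prems(1) y(3) acyclic_subset finite_acyclic_wf_converse by blast
  have "y - x \<noteq> {}"
    using Suc.hyps(2) by (metis card.empty nat.distinct(1))
  then obtain b0 where "b0 \<in> Range (y - x)"
    by auto
  from wf_eq_minimal[THEN iffD1, OF wf, rule_format, OF this]
  obtain b where b: "b \<in> Range (y - x)"
    and b_min: "\<forall>c. (b, c) \<in> y - x \<longrightarrow> c \<notin> Range (y - x)"
    by blast
  \<comment> \<open>\<open>b\<close> is a root of \<open>y\<close> (no parent in \<open>x\<close> by hypothesis, none in \<open>y - x\<close> by
    minimality), so an edge ending in \<open>b\<close> can be the last one added\<close>
  have b_root: "(b, c) \<notin> y" for c
  proof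
    assume "(b, c) \<in> y"
    moreover have "(b, c) \<notin> x"
      using b Suc.prems(4) by blast
    ultimately show False
      using b_min by blast
  qed
  obtain a where ab: "(a, b) \<in> y - x"
    using b by blast
  define y' where "y' = y - {(a, b)}"
  have "(nap_cover V)\<^sup>*\<^sup>* x y'"
  proof (rule Suc.hyps(1))
    have "y' - x = (y - x) - {(a, b)}"
      unfolding y'_def by blast
    then show "n = card (y' - x)"
      using Suc.hyps(2) ab by simp
    show "finite (y' - x)"
      using Suc.prems(1) unfolding y'_def by (rule finite_subset[rotated]) blast
    show "rforest V y'"
      using y acyclic_subset unfolding rforest_def y'_def by blast
    show "x \<subseteq> y'"
      using Suc.prems(3) ab unfolding y'_def by blast
    show "Range (y' - x) \<inter> Domain x = {}"
      using Suc.prems(4) unfolding y'_def by blast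
  qed
  moreover have "nap_cover V y' y"
    unfolding nap_cover_def
  proof (intro exI conjI)
    show "a \<in> roots V y'"
      using ab y(1,2) unfolding roots_def y'_def by blast
    show "b \<in> roots V y'"
      using ab y(1) b_root unfolding roots_def y'_def by blast
    show "a \<noteq> b"
      using ab y(3) unfolding acyclic_def by blast
    show "y = insert (a, b) y'"
      using ab unfolding y'_def by blast
  qed
  ultimately show ?case
    by (rule rtranclp.rtrancl_into_rtrancl)
qed

lemma nap_le_iff:
  assumes "finite V"
  shows "nap_le V x y \<longleftrightarrow>
    rforest V x \<and> rforest V y \<and> x \<subseteq> y \<and> Range (y - x) \<inter> Domain x = {}"
proof
  assume "nap_le V x y"
  then show "rforest V x \<and> rforest V y \<and> x \<subseteq> y \<and> Range (y - x) \<inter> Domain x = {}"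
    unfolding nap_le_def using rtranclp_nap_cover_imp by blast
next
  assume xy: "rforest V x \<and> rforest V y \<and> x \<subseteq> y \<and> Range (y - x) \<inter> Domain x = {}"
  then have "finite y"
    using assms unfolding rforest_def by (meson finite_SigmaI finite_subset)
  then show "nap_le V x y"
    using xy unfolding nap_le_def by (simp add: rtranclp_nap_coverI)
qed

lemma rforest_subset: "rforest V E \<Longrightarrow> x \<subseteq> E \<Longrightarrow> rforest V x"
  unfolding rforest_def using acyclic_subset by blast

locale rooted_tree =
  fixes V :: "'a set" and E :: "('a \<times> 'a) set" and r :: 'a
  assumes rforest: "rforest V E" and roots: "roots V E = {r}"
begin

lemma edges_subset: "E \<subseteq> V \<times> V"
  and parent_unique: "(a, b) \<in> E \<Longrightarrow> (a, c) \<in> E \<Longrightarrow> b = c"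
  using rforest unfolding rforest_def by blast+

lemma root_in_V: "r \<in> V"
  and root_no_parent: "(r, w) \<notin> E"
  using roots unfolding roots_def by blast+

lemma parent_exists: "v \<in> V \<Longrightarrow> v \<noteq> r \<Longrightarrow> \<exists>w. (v, w) \<in> E"
  using roots unfolding roots_def by blast

definition parent_closed :: "'a set \<Rightarrow> bool" where
  "parent_closed R \<longleftrightarrow> R \<subseteq> V \<and> r \<in> R \<and> (\<forall>v w. v \<in> R \<longrightarrow> (v, w) \<in> E \<longrightarrow> w \<in> R)"

definition subtree :: "'a set \<Rightarrow> 'a set \<times> ('a \<times> 'a) set" where
  "subtree R = (R, E \<inter> R \<times> R)"

definition edges_outside :: "'a set \<Rightarrow> ('a \<times> 'a) set" where
  "edges_outside R = {(a, b) \<in> E. a \<notin> R}"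

lemma subrooted_iff: "subrooted s (V, E) \<longleftrightarrow> (\<exists>R. parent_closed R \<and> s = subtree R)"
  using rforest roots
  unfolding subrooted_def parent_closed_def subtree_def rtree_def by (cases s) auto

lemma subtree_roots:
  assumes "parent_closed R"
  shows "rtree R (E \<inter> R \<times> R)" "roots R (E \<inter> R \<times> R) = {r}"
proof -
  show roots_eq: "roots R (E \<inter> R \<times> R) = {r}"
    using assms parent_exists root_no_parent unfolding parent_closed_def roots_def by blast
  show "rtree R (E \<inter> R \<times> R)"
    using rforest_subset[OF rforest] roots_eq unfolding rtree_def rforest_def by blast
qed

lemma sub_le_subtree_iff:
  assumes "parent_closed R" "parent_closed S"
  shows "sub_le (subtree R) (subtree S) \<longleftrightarrow> S \<subseteq> R"
  using assms subtree_roots[OF assms(1)]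
  unfolding sub_le_def subrooted_def subtree_def parent_closed_def by auto

lemma roots_edges_outside: "R \<subseteq> V \<Longrightarrow> r \<in> R \<Longrightarrow> roots V (edges_outside R) = R"
  using parent_exists unfolding roots_def edges_outside_def by blast

lemma edges_outside_roots: "x \<subseteq> E \<Longrightarrow> edges_outside (roots V x) = x"
  using edges_subset parent_unique unfolding roots_def edges_outside_def by blast

lemma roots_parent_closed_iff:
  assumes "x \<subseteq> E"
  shows "parent_closed (roots V x) \<longleftrightarrow> Range (E - x) \<inter> Domain x = {}"
  using assms edges_subset parent_unique root_in_V root_no_parent
  unfolding parent_closed_def roots_def by blast

lemma nap_interval_eq:
  assumes "finite V"
  shows "{x. nap_le V nap_zero x \<and> nap_le V x E} = {x. x \<subseteq> E \<and> parent_closed (roots V x)}"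
proof -
  have "rforest V {}"
    using rforest_subset[OF rforest] by blast
  then show ?thesis
    using rforest rforest_subset[OF rforest] roots_parent_closed_iff
    unfolding nap_le_iff[OF assms] nap_zero_def by auto
qed

lemma nap_le_interval_iff:
  assumes "finite V" "x \<subseteq> E" "y \<subseteq> E" "parent_closed (roots V x)"
  shows "nap_le V x y \<longleftrightarrow> roots V y \<subseteq> roots V x"
proof -
  have "nap_le V x y \<longleftrightarrow> x \<subseteq> y"
    using assms rforest_subset[OF rforest] roots_parent_closed_iff[OF assms(2)]
    unfolding nap_le_iff[OF assms(1)] by blast
  also have "\<dots> \<longleftrightarrow> roots V y \<subseteq> roots V x"
  proof
    show "x \<subseteq> y \<Longrightarrow> roots V y \<subseteq> roots V x"
      unfolding roots_def by blast
    assume "roots V y \<subseteq> roots V x"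
    then have "edges_outside (roots V x) \<subseteq> edges_outside (roots V y)"
      unfolding edges_outside_def by blast
    then show "x \<subseteq> y"
      using assms(2,3) by (simp add: edges_outside_roots)
  qed
  finally show ?thesis .
qed

lemma bij_betw_subtree_roots:
  "bij_betw (\<lambda>x. subtree (roots V x))
     {x. x \<subseteq> E \<and> parent_closed (roots V x)} {s. subrooted s (V, E)}"
proof (rule bij_betw_byWitness[where f' = "\<lambda>s. edges_outside (fst s)"])
  have closed_sub: "parent_closed R \<Longrightarrow> R \<subseteq> V \<and> r \<in> R" for R
    unfolding parent_closed_def by blast
  show "\<forall>x\<in>{x. x \<subseteq> E \<and> parent_closed (roots V x)}.
      edges_outside (fst (subtree (roots V x))) = x"
    by (simp add: subtree_def edges_outside_roots)
  show "\<forall>s\<in>{s. subrooted s (V, E)}. subtree (roots V (edges_outside (fst s))) = s"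
    by (auto simp: subrooted_iff subtree_def roots_edges_outside dest: closed_sub)
  show "(\<lambda>x. subtree (roots V x)) ` {x. x \<subseteq> E \<and> parent_closed (roots V x)}
      \<subseteq> {s. subrooted s (V, E)}"
    by (auto simp: subrooted_iff)
  show "(\<lambda>s. edges_outside (fst s)) ` {s. subrooted s (V, E)}
      \<subseteq> {x. x \<subseteq> E \<and> parent_closed (roots V x)}"
  proof clarify
    fix s assume "subrooted s (V, E)"
    then obtain R where R: "parent_closed R" "s = subtree R"
      by (auto simp: subrooted_iff)
    then have "roots V (edges_outside R) = R"
      using closed_sub roots_edges_outside by blast
    then show "edges_outside (fst s) \<subseteq> E \<and> parent_closed (roots V (edges_outside (fst s)))"
      using R by (auto simp: subtree_def edges_outside_def)
  qed
qed

end

theorem proposition6p1: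
  fixes I :: "'a set" and t :: "('a \<times> 'a) set"
  assumes "finite I" and "rtree I t"
  shows "poset_iso {x. nap_le I nap_zero x \<and> nap_le I x t} (nap_le I)
                   {s. subrooted s (I, t)} sub_le"
proof -
  obtain r where "roots I t = {r}"
    using assms(2) unfolding rtree_def by blast
  then interpret rooted_tree I t r
    using assms(2) by unfold_locales (simp add: rtree_def)
  have "nap_le I x y \<longleftrightarrow> sub_le (subtree (roots I x)) (subtree (roots I y))"
    if "x \<subseteq> t" "parent_closed (roots I x)" "y \<subseteq> t" "parent_closed (roots I y)" for x y
    using that by (simp add: nap_le_interval_iff[OF assms(1)] sub_le_subtree_iff)
  then show ?thesis
    unfolding poset_iso_def nap_interval_eq[OF assms(1)]
    using bij_betw_subtree_roots by blast
qed

end
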